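(* Let $Q\in N_n$ be a subpermutation and $A\in QU_n$, and let $A^\infty$ be the Belitskii canonical form of $A$ under $B_n$-similarity. Then $A^\infty\in QU_n$, and there exist finitely many elementary $U_n$-similarity operations $\mathcal O_1,\dots,\mathcal O_m$ such that, with $A_0=A$ and $A_k=\mathcal O_k(A_{k-1})$, all of $A_0,\dots,A_m$ lie in $QU_n$ and $A_m=DA^\infty D^{-1}$ for some invertible diagonal matrix $D$ (i.e. $A_m$ is $D_n$-similar to $A^\infty$).
   Context: $\mathbb F$ is a field. $B_n$ (resp. $U_n$, $N_n$, $D_n$) denotes the set of $n\times n$ invertible upper triangular (resp. upper triangular with all diagonal entries $1$, strictly upper triangular, invertible diagonal) matrices over $\mathbb F$; $QU_n=\{QU:U\in U_n\}$; $E_{ij}$ is the matrix unit. A subpermutation is a matrix each of whose rows and columns has at most one nonzero entry, and that entry equals $1$. An elementary $U_n$-similarity operation is a map $\mathcal O_{p,q}^\lambda:N_n\to N_n$, $\mathcal O_{p,q}^\lambda(X)=(I_n+\lambda E_{pq})X(I_n+\lambda E_{pq})^{-1}$, for some $\lambda\in\mathbb F$ and $1\le p<q\le n$. Matrices $X,Y$ are $G$-similar if $Y=BXB^{-1}$ for some $B\in G$. Belitskii order on positions $\{(i,j):1\le i<j\le n\}$: $(i,j)\prec(i',j')$ iff $i>i'$, or $i=i'$ and $j<j'$. Belitskii's algorithm for $B_n$-similarity on $N_n$: given $A\in N_n$ put $A^{(0)}=A$, $G^{(0)}=B_n$. For $k=0,1,\dots$, let $(p,q)$ be the $(k+1)$th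 position in Belitskii order and look at the $(p,q)$ entries of all matrices $G^{(k)}$-similar to $A^{(k)}$: (a) if this entry is always $0$ or can take every value of $\mathbb F$, choose $A^{(k+1)}$ $G^{(k)}$-similar to $A^{(k)}$ with that entry $0$; (b) if it takes exactly the values of $\mathbb F\setminus\{0\}$, choose $A^{(k+1)}$ with that entry $1$; (c) otherwise it is a constant $\lambda\ne0$ and $A^{(k+1)}=A^{(k)}$. $G^{(k+1)}$ is the subgroup of $g\in G^{(k)}$ such that $gA^{(k+1)}g^{-1}$ agrees with $A^{(k+1)}$ in the first $k+1$ positions. The final matrix $A^\infty$ is the Belitskii canonical form of $A$. *)

theory Defs
  imports "Jordan_Normal_Form.Matrix"
begin

text \<open>Matrices are n x n JNF matrices over a field; indices are 0-based (0..n-1).\<close>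

definition strict_upper :: "nat \<Rightarrow> 'a::field mat set" where
  "strict_upper n = {A \<in> carrier_mat n n. \<forall>i<n. \<forall>j<n. j \<le> i \<longrightarrow> A $$ (i,j) = 0}"

definition unitri :: "nat \<Rightarrow> 'a::field mat set" where
  "unitri n = {U \<in> carrier_mat n n. (\<forall>i<n. \<forall>j<n. j < i \<longrightarrow> U $$ (i,j) = 0)
                  \<and> (\<forall>i<n. U $$ (i,i) = 1)}"

definition borel :: "nat \<Rightarrow> 'a::field mat set" where
  "borel n = {B \<in> carrier_mat n n. (\<forall>i<n. \<forall>j<n. j < i \<longrightarrow> B $$ (i,j) = 0)
                  \<and> (\<forall>i<n. B $$ (i,i) \<noteq> 0)}"

definition diag_inv :: "nat \<Rightarrow> 'a::field mat set" where
  "diag_inv n = {D \<in> carrier_mat n n. (\<forall>i<n. \<forall>j<n. i \<noteq> j \<longrightarrow> D $$ (i,j) = 0)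
                  \<and> (\<forall>i<n. D $$ (i,i) \<noteq> 0)}"

definition QU :: "nat \<Rightarrow> 'a::field mat \<Rightarrow> 'a mat set" where
  "QU n Q = {Q * U | U. U \<in> unitri n}"

definition subpermutation :: "nat \<Rightarrow> 'a::field mat \<Rightarrow> bool" where
  "subpermutation n Q \<longleftrightarrow> Q \<in> carrier_mat n n
     \<and> (\<forall>i<n. \<forall>j<n. Q $$ (i,j) = 0 \<or> Q $$ (i,j) = 1)
     \<and> (\<forall>i<n. \<forall>j<n. \<forall>j'<n. Q $$ (i,j) \<noteq> 0 \<longrightarrow> Q $$ (i,j') \<noteq> 0 \<longrightarrow> j = j')
     \<and> (\<forall>i<n. \<forall>i'<n. \<forall>j<n. Q $$ (i,j) \<noteq> 0 \<longrightarrow> Q $$ (i',j) \<noteq> 0 \<longrightarrow> i = i')"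

definition unit_mat_pq :: "nat \<Rightarrow> nat \<Rightarrow> nat \<Rightarrow> 'a::field mat" where
  "unit_mat_pq n p q = mat n n (\<lambda>(i,j). if i = p \<and> j = q then 1 else 0)"

text \<open>Elementary U_n-similarity operation O_{p,q}^\<lambda>; for p<q the matrix
  I - \<lambda> E_pq is the inverse of I + \<lambda> E_pq.\<close>
definition elem_op :: "nat \<Rightarrow> nat \<Rightarrow> nat \<Rightarrow> 'a::field \<Rightarrow> 'a mat \<Rightarrow> 'a mat" where
  "elem_op n p q c X = (1\<^sub>m n + c \<cdot>\<^sub>m unit_mat_pq n p q) * X * (1\<^sub>m n - c \<cdot>\<^sub>m unit_mat_pq n p q)"

definition sim_by :: "nat \<Rightarrow> 'a::field mat set \<Rightarrow> 'a mat \<Rightarrow> 'a mat \<Rightarrow> bool" where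
  "sim_by n G X Y \<longleftrightarrow> (\<exists>g\<in>G. \<exists>gi \<in> carrier_mat n n.
       g * gi = 1\<^sub>m n \<and> gi * g = 1\<^sub>m n \<and> Y = g * X * gi)"

text \<open>Belitskii order on positions (i,j), i<j (0-based): larger row first,
  within a row increasing column.\<close>
definition belitskii_positions :: "nat \<Rightarrow> (nat \<times> nat) list" where
  "belitskii_positions n = concat (map (\<lambda>i. map (\<lambda>j. (i,j)) [Suc i..<n]) (rev [0..<n]))"

definition belitskii_run :: "nat \<Rightarrow> 'a::field mat \<Rightarrow> (nat \<Rightarrow> 'a mat) \<Rightarrow> (nat \<Rightarrow> 'a mat set) \<Rightarrow> bool" where
  "belitskii_run n A As Gs \<longleftrightarrow>
     As 0 = A \<and> Gs 0 = borel n \<and>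
     (\<forall>k < length (belitskii_positions n).
        let (p,q) = belitskii_positions n ! k;
            vals = {Y $$ (p,q) | Y. sim_by n (Gs k) (As k) Y}
        in (if vals = {0} \<or> vals = UNIV then
              sim_by n (Gs k) (As k) (As (Suc k)) \<and> As (Suc k) $$ (p,q) = 0
            else if vals = UNIV - {0} then
              sim_by n (Gs k) (As k) (As (Suc k)) \<and> As (Suc k) $$ (p,q) = 1
            else As (Suc k) = As k)
           \<and> Gs (Suc k) = {g \<in> Gs k. \<exists>gi \<in> carrier_mat n n. g * gi = 1\<^sub>m n \<and> gi * g = 1\<^sub>m n \<and>
                 (\<forall>m \<le> k. let (i,j) = belitskii_positions n ! m in
                     (g * As (Suc k) * gi) $$ (i,j) = As (Suc k) $$ (i,j))})"

text \<open>B is a Belitskii canonical form of A: the final matrix of some run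
  (the form is unique, by Belitskii's theorem).\<close>
definition belitskii_form :: "nat \<Rightarrow> 'a::field mat \<Rightarrow> 'a mat \<Rightarrow> bool" where
  "belitskii_form n A B \<longleftrightarrow>
     (\<exists>As Gs. belitskii_run n A As Gs \<and> B = As (length (belitskii_positions n)))"

end

theory Submission
  imports Defs "Jordan_Normal_Form.Determinant"
begin

text \<open>
  A matrix lies in QU_n exactly when every row i of Q with a pivot (the column of its 1)
  forces row i to vanish left of the pivot and to be 1 at the pivot, all other rows being zero.
  Belitskii's algorithm conjugates only by B_n. At a position left of the pivot of its row the
  values reachable by the current group are {0} or all of F, at the pivot they are F without 0,
  so the algorithm writes 0 resp. 1 and its result lies in QU_n again.

  If h A h\<inverse> is the canonical form, write h = D u with D diagonal and u unitriangular.
  Comparing leading entries in (D\<inverse> A^\<infinity> D) u = u A shows that u is nonzero off the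
  diagonal only at positions (p,q) where the pivot of row p lies left of that of row q (or row q
  has none), and for such positions O_{p,q} preserves QU_n. Realising u by these operations
  gives a chain inside QU_n ending at D\<inverse> A^\<infinity> D.
\<close>

lemma index_mult_mat_square:
  assumes "A \<in> carrier_mat n n" "B \<in> carrier_mat n n" "i < n" "j < n"
  shows "(A * B) $$ (i,j) = (\<Sum>l<n. A $$ (i,l) * B $$ (l,j))"
  using assms by (auto simp: scalar_prod_def lessThan_atLeast0 intro!: sum.cong)

lemma sum_eq_single:
  assumes "finite S" "a \<in> S" "\<And>x. x \<in> S \<Longrightarrow> x \<noteq> a \<Longrightarrow> f x = 0"
  shows "sum f S = f a"
  using sum.mono_neutral_right[of S "{a}" f] assms by auto

lemma mult_inverse_unique:
  fixes g gi gi' :: "'a::semiring_1 mat"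
  assumes "g \<in> carrier_mat n n" "gi \<in> carrier_mat n n" "gi' \<in> carrier_mat n n"
    and "g * gi = 1\<^sub>m n" "gi' * g = 1\<^sub>m n"
  shows "gi' = gi"
proof -
  have "gi' = gi' * (g * gi)" using assms(3,4) by simp
  also have "\<dots> = (gi' * g) * gi" using assms(1-3) by simp
  also have "\<dots> = gi" using assms(2,5) by simp
  finally show ?thesis .
qed

lemma similar_mult_right:
  fixes A :: "'a::semiring_1 mat"
  assumes "A \<in> carrier_mat n n" "h \<in> carrier_mat n n" "hi \<in> carrier_mat n n" "hi * h = 1\<^sub>m n"
  shows "h * A * hi * h = h * A"
  using assms by (simp add: assoc_mult_mat[of _ n n _ n _ n])

section \<open>Borel matrices\<close>

lemma upper_triangular_mult:
  fixes A B :: "'a::field mat"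
  assumes A: "A \<in> carrier_mat n n" "upper_triangular A"
    and B: "B \<in> carrier_mat n n" "upper_triangular B"
  shows "upper_triangular (A * B)"
    and "i < n \<Longrightarrow> (A * B) $$ (i,i) = A $$ (i,i) * B $$ (i,i)"
proof -
  show "upper_triangular (A * B)"
  proof
    fix i j assume ij: "j < i" "i < dim_row (A * B)"
    then have i: "i < n" using A by simp
    have "A $$ (i,l) * B $$ (l,j) = 0" if "l < n" for l
    proof (cases "l < i")
      case True then show ?thesis using A i by auto
    next
      case False
      have "B $$ (l,j) = 0" by (rule upper_triangularD[OF B(2)]) (use B ij that False in auto)
      then show ?thesis by simp
    qed
    then show "(A * B) $$ (i,j) = 0"
      using ij i by (subst index_mult_mat_square[OF A(1) B(1)]) (auto intro!: sum.neutral)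
  qed
  show "(A * B) $$ (i,i) = A $$ (i,i) * B $$ (i,i)" if i: "i < n"
  proof -
    have "(A * B) $$ (i,i) = (\<Sum>l<n. A $$ (i,l) * B $$ (l,i))"
      by (rule index_mult_mat_square[OF A(1) B(1) i i])
    also have "\<dots> = A $$ (i,i) * B $$ (i,i)"
    proof (rule sum_eq_single)
      fix l assume "l \<in> {..<n}" "l \<noteq> i"
      then show "A $$ (i,l) * B $$ (l,i) = 0"
        using upper_triangularD[OF A(2), of l i] upper_triangularD[OF B(2), of i l] A B i
        by (cases "l < i") auto
    qed (use i in auto)
    finally show ?thesis .
  qed
qed

lemma borelD:
  assumes "g \<in> borel n"
  shows "g \<in> carrier_mat n n" "upper_triangular g" "i < n \<Longrightarrow> g $$ (i,i) \<noteq> 0"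
  using assms unfolding borel_def by auto

lemma borelI:
  assumes "g \<in> carrier_mat n n" "upper_triangular g" "\<And>i. i < n \<Longrightarrow> g $$ (i,i) \<noteq> 0"
  shows "g \<in> borel n"
  using assms unfolding borel_def by auto

lemma one_borel: "1\<^sub>m n \<in> borel n"
  by (auto simp: borel_def)

lemma borel_mult:
  assumes "g \<in> borel n" "h \<in> borel n"
  shows "g * h \<in> borel n"
  using upper_triangular_mult[OF borelD(1,2)[OF assms(1)] borelD(1,2)[OF assms(2)]]
    borelD[OF assms(1)] borelD[OF assms(2)]
  by (intro borelI) auto

lemma borel_inverse:
  fixes g gi :: "'a::field mat"
  assumes g: "g \<in> borel n" and gi: "gi \<in> carrier_mat n n" and inv: "gi * g = 1\<^sub>m n"
  shows "gi \<in> borel n"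
proof -
  note gc = borelD(1)[OF g]
  have lower: "\<forall>i<n. j < i \<longrightarrow> gi $$ (i,j) = 0" for j
  proof (induction j rule: less_induct)
    case (less j)
    show ?case
    proof (intro allI impI)
      fix i assume i: "i < n" "j < i"
      have jn: "j < n" using i by auto
      have "0 = (gi * g) $$ (i,j)" using inv i jn by simp
      also have "\<dots> = (\<Sum>l<n. gi $$ (i,l) * g $$ (l,j))" by (rule index_mult_mat_square[OF gi gc i(1) jn])
      also have "\<dots> = gi $$ (i,j) * g $$ (j,j)"
      proof (rule sum_eq_single)
        fix l assume "l \<in> {..<n}" "l \<noteq> j"
        then show "gi $$ (i,l) * g $$ (l,j) = 0" using less i g unfolding borel_def
          by (cases "l < j") auto
      qed (use jn in auto)
      finally show "gi $$ (i,j) = 0" using borelD(3)[OF g jn] by auto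
    qed
  qed
  then have ut: "upper_triangular gi" using gi by auto
  have "gi $$ (i,i) \<noteq> 0" if i: "i < n" for i
  proof
    assume "gi $$ (i,i) = 0"
    then have "(gi * g) $$ (i,i) = 0" using upper_triangular_mult(2)[OF gi ut borelD(1,2)[OF g] i] by simp
    then show False using inv i by simp
  qed
  then show ?thesis using gi ut by (intro borelI)
qed

lemma borel_invertible:
  fixes g :: "'a::field mat"
  assumes g: "g \<in> borel n"
  shows "\<exists>gi \<in> carrier_mat n n. g * gi = 1\<^sub>m n \<and> gi * g = 1\<^sub>m n"
proof -
  note gc = borelD(1)[OF g]
  have "det g = prod_list (diag_mat g)" by (rule det_upper_triangular[OF borelD(2)[OF g] gc])
  then have d: "det g \<noteq> 0" using borelD(3)[OF g] gc by (auto simp: diag_mat_def prod_list_zero_iff)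
  have one: "inverse (det g) \<cdot>\<^sub>m (det g \<cdot>\<^sub>m 1\<^sub>m n) = 1\<^sub>m n"
    using d by (intro eq_matI) auto
  define gi where "gi = inverse (det g) \<cdot>\<^sub>m adj_mat g"
  have "gi \<in> carrier_mat n n" using adj_mat(1)[OF gc] by (simp add: gi_def)
  moreover have "g * gi = 1\<^sub>m n" "gi * g = 1\<^sub>m n"
    using adj_mat[OF gc] one gc
    by (simp_all add: gi_def mult_smult_distrib[of _ n n _ n] mult_smult_assoc_mat[of _ n n _ n])
  ultimately show ?thesis by blast
qed

lemma strict_upper_mult_upper_triangular:
  fixes X g :: "'a::field mat"
  assumes X: "X \<in> strict_upper n" and g: "g \<in> carrier_mat n n" "upper_triangular g"
  shows "g * X \<in> strict_upper n" "X * g \<in> strict_upper n"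
proof -
  have Xc: "X \<in> carrier_mat n n" and X0: "\<And>i j. i < n \<Longrightarrow> j \<le> i \<Longrightarrow> X $$ (i,j) = 0"
    using X unfolding strict_upper_def by auto
  have g0: "\<And>i j. i < n \<Longrightarrow> j < i \<Longrightarrow> g $$ (i,j) = 0" using g by auto
  have "(g * X) $$ (i,j) = 0" if ij: "i < n" "j < n" "j \<le> i" for i j
  proof -
    have "g $$ (i,l) * X $$ (l,j) = 0" if "l < n" for l
      using g0[of i l] X0[of l j] ij that by (cases "l < i") auto
    then show ?thesis using ij by (subst index_mult_mat_square[OF g(1) Xc]) (auto intro!: sum.neutral)
  qed
  then show "g * X \<in> strict_upper n" using g Xc unfolding strict_upper_def by auto
  have "(X * g) $$ (i,j) = 0" if ij: "i < n" "j < n" "j \<le> i" for i j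
  proof -
    have "X $$ (i,l) * g $$ (l,j) = 0" if "l < n" for l
      using g0[of l j] X0[of i l] ij that by (cases "l \<le> i") auto
    then show ?thesis using ij by (subst index_mult_mat_square[OF Xc g(1)]) (auto intro!: sum.neutral)
  qed
  then show "X * g \<in> strict_upper n" using g Xc unfolding strict_upper_def by auto
qed

lemma borel_similar_strict_upper:
  assumes "X \<in> strict_upper n" "g \<in> borel n" "gi \<in> borel n"
  shows "g * X * gi \<in> strict_upper n"
  using strict_upper_mult_upper_triangular assms borelD(1,2) by metis

lemma upper_similar_entry_cong:
  fixes X X' g gi :: "'a::field mat"
  assumes g: "g \<in> carrier_mat n n" "upper_triangular g"
    and gi: "gi \<in> carrier_mat n n" "upper_triangular gi"
    and X: "X \<in> carrier_mat n n" "X' \<in> carrier_mat n n"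
    and agree: "\<And>l m. i \<le> l \<Longrightarrow> l < n \<Longrightarrow> m \<le> j \<Longrightarrow> X $$ (l,m) = X' $$ (l,m)"
    and ij: "i < n" "j < n"
  shows "(g * X * gi) $$ (i,j) = (g * X' * gi) $$ (i,j)"
proof -
  have row: "(g * X) $$ (i,m) = (g * X') $$ (i,m)" if m: "m < n" "m \<le> j" for m
  proof -
    have "g $$ (i,l) * X $$ (l,m) = g $$ (i,l) * X' $$ (l,m)" if l: "l < n" for l
      using agree[of l m] g ij l m by (cases "l < i") auto
    then show ?thesis
      unfolding index_mult_mat_square[OF g(1) X(1) ij(1) m(1)]
        index_mult_mat_square[OF g(1) X(2) ij(1) m(1)]
      by (intro sum.cong) auto
  qed
  have "(g * X) $$ (i,m) * gi $$ (m,j) = (g * X') $$ (i,m) * gi $$ (m,j)" if m: "m < n" for m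
    using row[OF m] gi ij m by (cases "m \<le> j") auto
  then show ?thesis
    unfolding index_mult_mat_square[OF mult_carrier_mat[OF g(1) X(1)] gi(1) ij]
      index_mult_mat_square[OF mult_carrier_mat[OF g(1) X(2)] gi(1) ij]
    by (intro sum.cong) auto
qed

lemma sim_by_refl:
  assumes "1\<^sub>m n \<in> G" "X \<in> carrier_mat n n"
  shows "sim_by n G X X"
  unfolding sim_by_def using assms by (intro bexI[of _ "1\<^sub>m n"]) auto

lemma sim_by_borelE:
  assumes "sim_by n (borel n) A X"
  obtains h hi where "h \<in> borel n" "hi \<in> borel n" "h * hi = 1\<^sub>m n" "hi * h = 1\<^sub>m n"
    "X = h * A * hi"
  using assms borel_inverse unfolding sim_by_def by metis

lemma sim_by_borel_trans:
  fixes A X Y :: "'a::field mat"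
  assumes A: "A \<in> carrier_mat n n" and AX: "sim_by n (borel n) A X"
    and XY: "sim_by n G X Y" and G: "G \<subseteq> borel n"
  shows "sim_by n (borel n) A Y"
proof -
  obtain h hi where h: "h \<in> borel n" "hi \<in> borel n" "h * hi = 1\<^sub>m n" "hi * h = 1\<^sub>m n"
    and X: "X = h * A * hi"
    using AX by (rule sim_by_borelE)
  obtain g gi where g: "g \<in> borel n" "gi \<in> carrier_mat n n" "g * gi = 1\<^sub>m n" "gi * g = 1\<^sub>m n"
    and Y: "Y = g * X * gi"
    using XY G unfolding sim_by_def by blast
  note c = borelD(1)[OF h(1)] borelD(1)[OF h(2)] borelD(1)[OF g(1)] g(2) A
  have "(g * h) * (hi * gi) = g * (h * hi) * gi" "(hi * gi) * (g * h) = hi * (gi * g) * h"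
    "Y = (g * h) * A * (hi * gi)"
    using c unfolding Y X by (simp_all add: assoc_mult_mat[of _ n n _ n _ n])
  then show ?thesis unfolding sim_by_def using h g c
    by (intro bexI[OF _ borel_mult[OF g(1) h(1)]] bexI[of _ "hi * gi"]) auto
qed

lemma sim_by_borel_strict_upper:
  assumes "A \<in> strict_upper n" "sim_by n (borel n) A X"
  shows "X \<in> strict_upper n"
  using assms(2) by (rule sim_by_borelE) (use assms(1) borel_similar_strict_upper in auto)

lemma mat_diag_similar_entry:
  assumes "Y \<in> carrier_mat n n" "i < n" "j < n"
  shows "(mat_diag n d * Y * mat_diag n e) $$ (i,j) = d i * Y $$ (i,j) * e j"
  using assms by (simp add: mat_diag_mult_left[of _ n n] mat_diag_mult_right[of _ n n])

lemma mat_diag_inverse: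
  fixes d :: "nat \<Rightarrow> 'a::field"
  assumes "\<And>i. i < n \<Longrightarrow> d i \<noteq> 0"
  shows "mat_diag n d * mat_diag n (\<lambda>i. inverse (d i)) = 1\<^sub>m n"
    "mat_diag n (\<lambda>i. inverse (d i)) * mat_diag n d = 1\<^sub>m n"
  unfolding mat_diag_diag using assms by (auto intro!: eq_matI simp: mat_diag_def)

lemma mat_diag_diag_inv:
  assumes "\<And>i. i < n \<Longrightarrow> d i \<noteq> 0"
  shows "mat_diag n d \<in> diag_inv n"
  using assms by (auto simp: diag_inv_def mat_diag_def)

lemma mat_diag_borel:
  assumes "\<And>i. i < n \<Longrightarrow> d i \<noteq> 0"
  shows "mat_diag n d \<in> borel n"
  using assms by (auto simp: borel_def mat_diag_def)

section \<open>Row replacements and transvections\<close>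

definition row_replace :: "nat \<Rightarrow> nat \<Rightarrow> (nat \<Rightarrow> 'a::field) \<Rightarrow> 'a mat" where
  "row_replace n p b = mat n n (\<lambda>(i,j). if i = p then b j else if i = j then 1 else 0)"

lemma row_replace_carrier[simp]: "row_replace n p b \<in> carrier_mat n n"
  and row_replace_dim[simp]: "dim_row (row_replace n p b) = n" "dim_col (row_replace n p b) = n"
  by (simp_all add: row_replace_def)

lemma row_replace_mult_left:
  assumes "M \<in> carrier_mat n n" "i < n" "j < n"
  shows "(row_replace n p b * M) $$ (i,j) = (if i = p then (\<Sum>l<n. b l * M $$ (l,j)) else M $$ (i,j))"
proof (cases "i = p")
  case True then show ?thesis
    unfolding index_mult_mat_square[OF row_replace_carrier assms]
    using assms by (auto simp: row_replace_def intro!: sum.cong)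
next
  case False
  have "(\<Sum>l<n. row_replace n p b $$ (i,l) * M $$ (l,j)) = row_replace n p b $$ (i,i) * M $$ (i,j)"
    by (rule sum_eq_single) (use assms False in \<open>auto simp: row_replace_def\<close>)
  then show ?thesis
    unfolding index_mult_mat_square[OF row_replace_carrier assms]
    using False assms by (simp add: row_replace_def)
qed

lemma row_replace_mult_right:
  assumes "M \<in> carrier_mat n n" "i < n" "j < n" "p < n"
  shows "(M * row_replace n p b) $$ (i,j) = M $$ (i,p) * b j + (if j = p then 0 else M $$ (i,j))"
proof -
  have "(M * row_replace n p b) $$ (i,j) = (\<Sum>l<n. M $$ (i,l) * row_replace n p b $$ (l,j))"
    by (rule index_mult_mat_square[OF assms(1) row_replace_carrier assms(2,3)])
  also have "\<dots> = M $$ (i,p) * row_replace n p b $$ (p,j)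
      + (\<Sum>l\<in>{..<n}-{p}. M $$ (i,l) * row_replace n p b $$ (l,j))"
    using assms by (simp add: sum.remove[of "{..<n}" p])
  also have "(\<Sum>l\<in>{..<n}-{p}. M $$ (i,l) * row_replace n p b $$ (l,j)) = (if j = p then 0 else M $$ (i,j))"
  proof (cases "j = p")
    case True then show ?thesis using assms by (auto simp: row_replace_def intro!: sum.neutral)
  next
    case False
    have "(\<Sum>l\<in>{..<n}-{p}. M $$ (i,l) * row_replace n p b $$ (l,j)) = M $$ (i,j) * row_replace n p b $$ (j,j)"
      by (rule sum_eq_single) (use assms False in \<open>auto simp: row_replace_def\<close>)
    then show ?thesis using False assms by (simp add: row_replace_def)
  qed
  finally show ?thesis using assms by (simp add: row_replace_def)
qed

lemma row_replace_inverse: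
  assumes "p < n" "b p = 1"
  shows "row_replace n p b * row_replace n p (\<lambda>j. if j = p then 1 else - b j) = 1\<^sub>m n"
    "row_replace n p (\<lambda>j. if j = p then 1 else - b j) * row_replace n p b = 1\<^sub>m n"
proof -
  let ?b' = "\<lambda>j. if j = p then 1 else - b j"
  have "(row_replace n p b * row_replace n p ?b') $$ (i,j) = 1\<^sub>m n $$ (i,j)"
    "(row_replace n p ?b' * row_replace n p b) $$ (i,j) = 1\<^sub>m n $$ (i,j)" if "i < n" "j < n" for i j
    using assms that by (subst row_replace_mult_right; force simp: row_replace_def)+
  then show "row_replace n p b * row_replace n p ?b' = 1\<^sub>m n"
    "row_replace n p ?b' * row_replace n p b = 1\<^sub>m n"
    by (auto intro!: eq_matI)
qed

lemma row_replace_borel: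
  assumes "b p \<noteq> 0" "\<And>j. j < p \<Longrightarrow> b j = 0"
  shows "row_replace n p b \<in> borel n"
  using assms by (auto simp: borel_def row_replace_def)

definition transvection :: "nat \<Rightarrow> nat \<Rightarrow> nat \<Rightarrow> 'a::field \<Rightarrow> 'a mat" where
  "transvection n p q c = 1\<^sub>m n + c \<cdot>\<^sub>m unit_mat_pq n p q"

lemma transvection_carrier[simp]: "transvection n p q c \<in> carrier_mat n n"
  and transvection_dim[simp]: "dim_row (transvection n p q c) = n" "dim_col (transvection n p q c) = n"
  by (simp_all add: transvection_def unit_mat_pq_def)

lemma index_transvection:
  "i < n \<Longrightarrow> j < n \<Longrightarrow>
    transvection n p q c $$ (i,j) = (if i = j then 1 else 0) + (if i = p \<and> j = q then c else 0)"
  by (simp add: transvection_def unit_mat_pq_def)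

lemma elem_op_transvection:
  "elem_op n p q c X = transvection n p q c * X * transvection n p q (- c)"
proof -
  have "1\<^sub>m n - c \<cdot>\<^sub>m unit_mat_pq n p q = transvection n p q (- c)"
    by (auto intro!: eq_matI simp: transvection_def unit_mat_pq_def)
  then show ?thesis unfolding elem_op_def transvection_def by simp
qed

lemma transvection_row_replace:
  assumes "p \<noteq> q"
  shows "transvection n p q c = row_replace n p (\<lambda>j. (if j = p then 1 else 0) + (if j = q then c else 0))"
  using assms by (auto intro!: eq_matI simp: transvection_def row_replace_def unit_mat_pq_def)

lemma transvection_mult_left:
  assumes "M \<in> carrier_mat n n" "p \<noteq> q" "q < n" "i < n" "j < n"
  shows "(transvection n p q c * M) $$ (i,j) = M $$ (i,j) + (if i = p then c * M $$ (q,j) else 0)"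
proof -
  have "(\<Sum>l<n. ((if l = p then 1 else 0) + (if l = q then c else 0)) * M $$ (l,j))
      = M $$ (p,j) + c * M $$ (q,j)" if p: "p < n"
  proof -
    have "(\<Sum>l<n. ((if l = p then 1 else 0) + (if l = q then c else 0)) * M $$ (l,j))
      = (\<Sum>l<n. (if l = p then M $$ (l,j) else 0) + (if l = q then c * M $$ (l,j) else 0))"
      using assms by (intro sum.cong) auto
    also have "\<dots> = M $$ (p,j) + c * M $$ (q,j)"
      using assms p by (simp add: sum.distrib)
    finally show ?thesis .
  qed
  then show ?thesis
    using assms by (auto simp del: index_mult_mat simp: transvection_row_replace row_replace_mult_left)
qed

lemma transvection_mult_right:
  assumes "M \<in> carrier_mat n n" "p \<noteq> q" "p < n" "i < n" "j < n"
  shows "(M * transvection n p q c) $$ (i,j) = M $$ (i,j) + (if j = q then c * M $$ (i,p) else 0)"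
  using assms
  by (auto simp del: index_mult_mat simp: transvection_row_replace row_replace_mult_right)

lemma transvection_inverse:
  assumes "p \<noteq> q" "p < n" "q < n"
  shows "transvection n p q (- c) * transvection n p q c = 1\<^sub>m n"
proof -
  have "(transvection n p q (- c) * transvection n p q c) $$ (i,j) = 1\<^sub>m n $$ (i,j)"
    if "i < n" "j < n" for i j
    using assms that by (subst transvection_mult_left) (auto simp: index_transvection)
  then show ?thesis by (auto intro!: eq_matI)
qed

lemma elem_op_entry:
  assumes X: "X \<in> strict_upper n" and pq: "p < q" "q < n" and ij: "i < n" "j < n"
  shows "elem_op n p q c X $$ (i,j)
    = X $$ (i,j) + (if i = p then c * X $$ (q,j) else 0) - (if j = q then c * X $$ (i,p) else 0)"
proof -
  have Xc: "X \<in> carrier_mat n n" and "X $$ (q,p) = 0" using X pq unfolding strict_upper_def by auto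
  then show ?thesis
    using pq ij unfolding elem_op_transvection
    by (simp del: index_mult_mat add: transvection_mult_right[OF mult_carrier_mat[OF transvection_carrier Xc]]
        transvection_mult_left[OF Xc])
qed

lemma elem_op_carrier: "X \<in> carrier_mat n n \<Longrightarrow> elem_op n p q c X \<in> carrier_mat n n"
  unfolding elem_op_transvection by (meson mult_carrier_mat transvection_carrier)

definition elem_op_chain :: "nat \<Rightarrow> (nat \<times> nat \<times> 'a::field) list \<Rightarrow> (nat \<Rightarrow> 'a mat) \<Rightarrow> bool" where
  "elem_op_chain n ops As \<longleftrightarrow> (\<forall>k < length ops. let (p,q,c) = ops ! k in
     p < q \<and> q < n \<and> As (Suc k) = elem_op n p q c (As k))"

lemma elem_op_chain_Nil: "elem_op_chain n [] As"
  by (simp add: elem_op_chain_def)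

lemma elem_op_chain_snoc:
  assumes chain: "elem_op_chain n ops As" and pq: "p < q" "q < n"
  shows "elem_op_chain n (ops @ [(p,q,c)]) (As(Suc (length ops) := elem_op n p q c (As (length ops))))"
  unfolding elem_op_chain_def
proof (intro allI impI)
  let ?As = "As(Suc (length ops) := elem_op n p q c (As (length ops)))"
  fix k assume "k < length (ops @ [(p,q,c)])"
  then consider "k < length ops" | "k = length ops" by fastforce
  then show "let (p',q',c') = (ops @ [(p,q,c)]) ! k in
      p' < q' \<and> q' < n \<and> ?As (Suc k) = elem_op n p' q' c' (?As k)"
  proof cases
    case 1 then show ?thesis
      using chain unfolding elem_op_chain_def by (auto simp: nth_append split: prod.splits)
  next
    case 2 then show ?thesis using pq by simp
  qed
qed

lemma unitri_split_transvection:
  fixes u :: "'a::field mat"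
  assumes u: "u \<in> unitri n" and pq: "p < q" "q < n"
    and row_q: "\<And>j. q < j \<Longrightarrow> j < n \<Longrightarrow> u $$ (q,j) = 0"
  defines "u' \<equiv> mat n n (\<lambda>(i,j). if (i,j) = (p,q) then 0 else u $$ (i,j))"
  shows "transvection n p q (u $$ (p,q)) * u' = u" and "u' \<in> unitri n"
proof -
  have uc: "u \<in> carrier_mat n n" and u'c: "u' \<in> carrier_mat n n"
    using u unfolding unitri_def u'_def by auto
  have "(transvection n p q (u $$ (p,q)) * u') $$ (i,j) = u $$ (i,j)" if ij: "i < n" "j < n" for i j
  proof -
    have "u $$ (q,j) = (if q = j then 1 else 0)"
      using u row_q[of j] ij pq unfolding unitri_def by (cases j q rule: linorder_cases) auto
    then show ?thesis
      using transvection_mult_left[OF u'c _ pq(2) ij, of p] pq ij by (auto simp: u'_def)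
  qed
  then show "transvection n p q (u $$ (p,q)) * u' = u"
    using uc by (intro eq_matI) (auto simp: u'_def)
  show "u' \<in> unitri n" using u pq unfolding unitri_def u'_def by auto
qed

section \<open>The pattern of QU_n\<close>

locale subpermutation_pattern =
  fixes n :: nat and Q :: "'a::field mat"
  assumes Q_strict_upper: "Q \<in> strict_upper n" and Q_subpermutation: "subpermutation n Q"
begin

lemma Q_carrier: "Q \<in> carrier_mat n n"
  using Q_strict_upper by (simp add: strict_upper_def)

definition has_pivot :: "nat \<Rightarrow> bool" where
  "has_pivot i \<longleftrightarrow> (\<exists>s<n. Q $$ (i,s) \<noteq> 0)"

definition pivot :: "nat \<Rightarrow> nat" where
  "pivot i = (THE s. s < n \<and> Q $$ (i,s) \<noteq> 0)"

lemma pivot_eq: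
  assumes "i < n" "s < n" "Q $$ (i,s) \<noteq> 0"
  shows "pivot i = s"
  unfolding pivot_def
  by (rule the_equality) (use assms Q_subpermutation in \<open>auto simp: subpermutation_def\<close>)

lemma pivot:
  assumes "i < n" "has_pivot i"
  shows "pivot i < n" "Q $$ (i, pivot i) = 1" "i < pivot i"
proof -
  obtain s where s: "s < n" "Q $$ (i,s) \<noteq> 0" using assms unfolding has_pivot_def by auto
  then have ps: "pivot i = s" using pivot_eq assms(1) by blast
  show "pivot i < n" using ps s by simp
  show "Q $$ (i, pivot i) = 1" using ps s assms(1) Q_subpermutation unfolding subpermutation_def by blast
  show "i < pivot i"
  proof (rule ccontr)
    assume "\<not> i < pivot i"
    then have "Q $$ (i,s) = 0" using ps s assms(1) Q_strict_upper unfolding strict_upper_def by auto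
    then show False using s by simp
  qed
qed

lemma Q_entry:
  assumes "i < n" "s < n"
  shows "Q $$ (i,s) = (if has_pivot i \<and> s = pivot i then 1 else 0)"
  using assms pivot pivot_eq unfolding has_pivot_def by (metis (full_types))

lemma pivot_inj:
  assumes "i < n" "i' < n" "has_pivot i" "has_pivot i'" "pivot i = pivot i'"
  shows "i = i'"
  using assms pivot[of i] pivot[of i'] Q_subpermutation unfolding subpermutation_def
  by (metis zero_neq_one)

lemma Q_mult_entry:
  assumes U: "U \<in> carrier_mat n n" and ij: "i < n" "j < n"
  shows "(Q * U) $$ (i,j) = (if has_pivot i then U $$ (pivot i, j) else 0)"
proof -
  have "(Q * U) $$ (i,j) = (\<Sum>l<n. Q $$ (i,l) * U $$ (l,j))"
    by (rule index_mult_mat_square[OF Q_carrier U ij])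
  also have "\<dots> = (if has_pivot i then U $$ (pivot i, j) else 0)"
  proof (cases "has_pivot i")
    case True
    then have "(\<Sum>l<n. Q $$ (i,l) * U $$ (l,j)) = Q $$ (i, pivot i) * U $$ (pivot i, j)"
      using ij pivot[OF ij(1)] by (intro sum_eq_single) (auto simp: Q_entry)
    then show ?thesis using True pivot[OF ij(1)] by simp
  next
    case False then show ?thesis using ij by (auto simp: Q_entry intro!: sum.neutral)
  qed
  finally show ?thesis .
qed

text \<open>For X = Q U, row i of X is row (pivot i) of U if row i of Q has a pivot, and zero
  otherwise.\<close>
definition fits_at :: "'a mat \<Rightarrow> nat \<Rightarrow> nat \<Rightarrow> bool" where
  "fits_at X i j \<longleftrightarrow>
     (if has_pivot i then (j < pivot i \<longrightarrow> X $$ (i,j) = 0) \<and> (j = pivot i \<longrightarrow> X $$ (i,j) = 1)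
      else X $$ (i,j) = 0)"

lemma QU_iff_fits: "X \<in> QU n Q \<longleftrightarrow> X \<in> carrier_mat n n \<and> (\<forall>i<n. \<forall>j<n. fits_at X i j)"
proof
  assume "X \<in> QU n Q"
  then obtain U where U: "U \<in> unitri n" and X: "X = Q * U" unfolding QU_def by auto
  have Uc: "U \<in> carrier_mat n n" using U unfolding unitri_def by auto
  have "fits_at X i j" if ij: "i < n" "j < n" for i j
    using U pivot[OF ij(1)] ij unfolding X Q_mult_entry[OF Uc ij] fits_at_def unitri_def by auto
  then show "X \<in> carrier_mat n n \<and> (\<forall>i<n. \<forall>j<n. fits_at X i j)"
    using Q_carrier Uc X by auto
next
  assume "X \<in> carrier_mat n n \<and> (\<forall>i<n. \<forall>j<n. fits_at X i j)"
  then have Xc: "X \<in> carrier_mat n n" and fits: "\<And>i j. i < n \<Longrightarrow> j < n \<Longrightarrow> fits_at X i j" by auto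
  define row_of where "row_of c = (THE i. i < n \<and> has_pivot i \<and> pivot i = c)" for c
  have row_of: "row_of (pivot i) = i" if "i < n" "has_pivot i" for i
    unfolding row_of_def by (rule the_equality) (use that pivot_inj in auto)
  define U where "U = mat n n (\<lambda>(c,j).
    if \<exists>i<n. has_pivot i \<and> pivot i = c then X $$ (row_of c, j) else if c = j then 1 else 0)"
  have Uc: "U \<in> carrier_mat n n" by (simp add: U_def)
  have U_pivot: "U $$ (pivot i, j) = X $$ (i,j)" if "i < n" "has_pivot i" "j < n" for i j
    using that pivot row_of by (auto simp: U_def)
  have "U \<in> unitri n"
    unfolding unitri_def
  proof (intro CollectI conjI allI impI Uc)
    fix c j assume cj: "c < n" "j < n" "j < c"
    show "U $$ (c,j) = 0"
    proof (cases "\<exists>i<n. has_pivot i \<and> pivot i = c")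
      case True
      then obtain i where "i < n" "has_pivot i" "pivot i = c" by auto
      then show ?thesis using fits[of i j] U_pivot[of i j] cj by (auto simp: fits_at_def)
    qed (use cj in \<open>auto simp: U_def\<close>)
  next
    fix c assume c: "c < n"
    show "U $$ (c,c) = 1"
    proof (cases "\<exists>i<n. has_pivot i \<and> pivot i = c")
      case True
      then obtain i where "i < n" "has_pivot i" "pivot i = c" by auto
      then show ?thesis using fits[of i c] U_pivot[of i c] c by (auto simp: fits_at_def)
    qed (use c in \<open>auto simp: U_def\<close>)
  qed
  moreover have "Q * U = X"
  proof (rule eq_matI)
    fix i j assume "i < dim_row X" "j < dim_col X"
    then have ij: "i < n" "j < n" using Xc by auto
    show "(Q * U) $$ (i,j) = X $$ (i,j)"
      unfolding Q_mult_entry[OF Uc ij] using fits[OF ij] U_pivot[OF ij(1) _ ij(2)]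
      by (auto simp: fits_at_def)
  qed (use Xc Uc Q_carrier in auto)
  ultimately show "X \<in> QU n Q" unfolding QU_def by auto
qed

lemma QU_carrier: "X \<in> QU n Q \<Longrightarrow> X \<in> carrier_mat n n"
  and QU_fits_at: "X \<in> QU n Q \<Longrightarrow> i < n \<Longrightarrow> j < n \<Longrightarrow> fits_at X i j"
  by (simp_all add: QU_iff_fits)

lemma QU_pivot_entry: "X \<in> QU n Q \<Longrightarrow> i < n \<Longrightarrow> has_pivot i \<Longrightarrow> X $$ (i, pivot i) = 1"
  using QU_fits_at[of X i "pivot i"] pivot by (auto simp: fits_at_def)

lemma QU_entry_nonzero:
  assumes "X \<in> QU n Q" "i < n" "j < n" "X $$ (i,j) \<noteq> 0"
  shows "has_pivot i" "pivot i \<le> j"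
  using QU_fits_at[OF assms(1-3)] assms(4) unfolding fits_at_def by (auto split: if_splits)

lemma QU_strict_upper:
  assumes "X \<in> QU n Q"
  shows "X \<in> strict_upper n"
proof -
  have "X $$ (i,j) = 0" if ij: "i < n" "j < n" "j \<le> i" for i j
  proof (rule ccontr)
    assume "X $$ (i,j) \<noteq> 0"
    then have "has_pivot i" "pivot i \<le> j" using QU_entry_nonzero[OF assms ij(1,2)] by auto
    then show False using pivot(3)[OF ij(1)] ij(3) by simp
  qed

  then show ?thesis using QU_carrier[OF assms] unfolding strict_upper_def by auto
qed

lemma QU_iff_strict_upper:
  "X \<in> QU n Q \<longleftrightarrow> X \<in> strict_upper n \<and> (\<forall>i j. i < j \<longrightarrow> j < n \<longrightarrow> fits_at X i j)"
proof (intro iffI conjI allI impI)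
  assume "X \<in> QU n Q"
  then show "X \<in> strict_upper n" and "\<And>i j. i < j \<Longrightarrow> j < n \<Longrightarrow> fits_at X i j"
    using QU_strict_upper QU_fits_at by auto
next
  assume X: "X \<in> strict_upper n \<and> (\<forall>i j. i < j \<longrightarrow> j < n \<longrightarrow> fits_at X i j)"
  have "fits_at X i j" if ij: "i < n" "j < n" for i j
  proof (cases "i < j")
    case True then show ?thesis using X ij by blast
  next
    case False
    then have "X $$ (i,j) = 0" using X ij unfolding strict_upper_def by auto
    then show ?thesis using pivot(3)[OF ij(1)] False unfolding fits_at_def by auto
  qed
  then show "X \<in> QU n Q" using X unfolding QU_iff_fits strict_upper_def by auto
qed

text \<open>Strong induction on the pivot column s: the only rows of X that are nonzero in
  column s are the row with pivot s and rows with pivots left of s.\<close>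
lemma QU_row_combination_zero:
  assumes X: "X \<in> QU n Q"
    and zero: "\<And>j. j < t \<Longrightarrow> j < n \<Longrightarrow> (\<Sum>l<n. c l * X $$ (l,j)) = 0"
    and l: "l < n" "has_pivot l" "pivot l < t"
  shows "c l = 0"
proof -
  have "\<forall>l<n. has_pivot l \<longrightarrow> pivot l = s \<longrightarrow> s < t \<longrightarrow> c l = 0" for s
  proof (induction s rule: less_induct)
    case (less s)
    show ?case
    proof (intro allI impI)
      fix l assume l: "l < n" "has_pivot l" "pivot l = s" "s < t"
      have s: "s < n" using pivot[OF l(1,2)] l by auto
      have "0 = (\<Sum>l'<n. c l' * X $$ (l',s))" using zero[OF l(4) s] by simp
      also have "\<dots> = c l * X $$ (l,s)"
      proof (rule sum_eq_single)
        fix l' assume l': "l' \<in> {..<n}" "l' \<noteq> l"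
        show "c l' * X $$ (l',s) = 0"
        proof (cases "X $$ (l',s) = 0")
          case False
          then have "has_pivot l'" "pivot l' \<le> s" using QU_entry_nonzero[OF X _ s] l' by auto
          moreover have "pivot l' \<noteq> s" using pivot_inj[of l' l] l l' \<open>has_pivot l'\<close> by auto
          ultimately show ?thesis using less[of "pivot l'"] l' l by auto
        qed simp
      qed (use l in auto)
      finally show "c l = 0" using QU_pivot_entry[OF X l(1,2)] l(3) by simp
    qed
  qed
  then show ?thesis using l by auto
qed

text \<open>Adding c times row q to row p keeps the leading 1 of row p only if row q starts
  to the right of it.\<close>
definition admissible :: "nat \<Rightarrow> nat \<Rightarrow> bool" where
  "admissible p q \<longleftrightarrow> \<not> has_pivot q \<or> (has_pivot p \<and> has_pivot q \<and> pivot p < pivot q)"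

lemma elem_op_QU:
  assumes X: "X \<in> QU n Q" and pq: "p < q" "q < n" and adm: "admissible p q"
  shows "elem_op n p q c X \<in> QU n Q"
  unfolding QU_iff_fits
proof (intro conjI allI impI)
  show "elem_op n p q c X \<in> carrier_mat n n" using elem_op_carrier QU_carrier[OF X] by blast
  fix i j assume ij: "i < n" "j < n"
  have col_p: "X $$ (i,p) = 0" if "\<not> (has_pivot i \<and> pivot i \<le> p)"
    using QU_entry_nonzero[OF X ij(1), of p] pq that by auto
  have row_q: "X $$ (q,j) = 0" if "\<not> (has_pivot q \<and> pivot q \<le> j)"
    using QU_entry_nonzero[OF X pq(2) ij(2)] that by auto
  note fits = QU_fits_at[OF X ij, unfolded fits_at_def]
  note entry = elem_op_entry[OF QU_strict_upper[OF X] pq ij, of c]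
  show "fits_at (elem_op n p q c X) i j"
  proof (cases "has_pivot i")
    case True
    have "i = p \<Longrightarrow> j \<le> pivot i \<Longrightarrow> X $$ (q,j) = 0"
      using row_q adm unfolding admissible_def by auto
    moreover have "j = q \<Longrightarrow> j \<le> pivot i \<Longrightarrow> X $$ (i,p) = 0"
      using col_p pq by auto
    ultimately show ?thesis using True fits unfolding fits_at_def entry by auto
  next
    case False
    have "i = p \<Longrightarrow> X $$ (q,j) = 0"
      using row_q adm False unfolding admissible_def by auto
    then show ?thesis using False fits col_p unfolding fits_at_def entry by auto
  qed
qed

lemma intertwiner_admissible:
  assumes X: "X \<in> QU n Q" and Y: "Y \<in> QU n Q" and H: "H \<in> borel n" and YH: "Y * H = H * X"
    and pq: "p < q" "q < n" and nz: "H $$ (p,q) \<noteq> 0"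
  shows "admissible p q"
proof (cases "has_pivot q")
  case False then show ?thesis by (simp add: admissible_def)
next
  case q: True
  have p: "p < n" using pq by auto
  note c = borelD(1)[OF H] QU_carrier[OF X] QU_carrier[OF Y]
  have row: "(\<Sum>l<n. H $$ (p,l) * X $$ (l,j)) = (\<Sum>l<n. Y $$ (p,l) * H $$ (l,j))" if j: "j < n" for j
    using index_mult_mat_square[OF c(1,2) p j] index_mult_mat_square[OF c(3,1) p j] YH by simp
  have H_low: "H $$ (l,j) = 0" if "j < l" "l < n" for l j
    using borelD(2)[OF H] that c(1) by auto
  show ?thesis
  proof (cases "has_pivot p")
    case False
    have "(\<Sum>l<n. H $$ (p,l) * X $$ (l,j)) = 0" if j: "j < n" for j
      unfolding row[OF j] using QU_fits_at[OF Y p] False by (auto simp: fits_at_def intro!: sum.neutral)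
    then have "H $$ (p,q) = 0"
      using QU_row_combination_zero[OF X, of n "\<lambda>l. H $$ (p,l)" q] pq q pivot[of q] by auto
    then show ?thesis using nz by simp
  next
    case p_piv: True
    have "(\<Sum>l<n. H $$ (p,l) * X $$ (l,j)) = 0" if j: "j < pivot p" "j < n" for j
      unfolding row[OF j(2)]
    proof (intro sum.neutral ballI)
      fix l assume l: "l \<in> {..<n}"
      show "Y $$ (p,l) * H $$ (l,j) = 0"
        using QU_fits_at[OF Y p, of l] H_low[of j l] p_piv l j by (cases "l < pivot p") (auto simp: fits_at_def)
    qed
    then have "\<not> pivot q < pivot p"
      using QU_row_combination_zero[OF X, of "pivot p" "\<lambda>l. H $$ (p,l)" q] pq q nz by auto
    moreover have "pivot q \<noteq> pivot p" using pivot_inj[of q p] pq q p_piv by auto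
    ultimately show ?thesis unfolding admissible_def using p_piv q by auto
  qed
qed

lemma elem_op_chain_extend:
  fixes c :: 'a
  assumes chain: "elem_op_chain n ops As" and QU: "\<forall>k \<le> length ops. As k \<in> QU n Q"
    and intertw: "As (length ops) * u = u * X"
    and u: "u \<in> carrier_mat n n" and X: "X \<in> carrier_mat n n"
    and pq: "p < q" "q < n" and adm: "admissible p q"
  defines "As' \<equiv> As(Suc (length ops) := elem_op n p q c (As (length ops)))"
  shows "elem_op_chain n (ops @ [(p,q,c)]) As'" "As' 0 = As 0"
    "\<forall>k \<le> length (ops @ [(p,q,c)]). As' k \<in> QU n Q"
    "As' (length (ops @ [(p,q,c)])) * (transvection n p q c * u) = (transvection n p q c * u) * X"
proof -
  show "elem_op_chain n (ops @ [(p,q,c)]) As'"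
    unfolding As'_def by (rule elem_op_chain_snoc[OF chain pq])
  show "As' 0 = As 0" by (simp add: As'_def)
  show "\<forall>k \<le> length (ops @ [(p,q,c)]). As' k \<in> QU n Q"
    using QU elem_op_QU[OF _ pq adm] unfolding As'_def by auto
  note assoc = assoc_mult_mat[of _ n n _ n _ n] mult_carrier_mat[of _ n n _ n]
  let ?T = "transvection n p q"
  have Lc: "As (length ops) \<in> carrier_mat n n" using QU QU_carrier by auto
  have "As' (length (ops @ [(p,q,c)])) * (?T c * u)
      = ?T c * As (length ops) * (?T (- c) * ?T c) * u"
    using Lc u by (simp add: As'_def elem_op_transvection assoc)
  also have "\<dots> = ?T c * (As (length ops) * u)"
    using Lc u pq by (simp add: transvection_inverse assoc)
  also have "\<dots> = (?T c * u) * X"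
    using intertw X u by (simp add: assoc)
  finally show "As' (length (ops @ [(p,q,c)])) * (?T c * u) = (?T c * u) * X" .
qed

text \<open>Induction on the number of nonzero entries of u above the diagonal: the entry (p,q)
  in the lowest such row splits off as a transvection on the left, which is then
  realised as the last elementary operation.\<close>
lemma elem_ops_intertwine:
  assumes "u \<in> unitri n" "\<And>p q. p < q \<Longrightarrow> q < n \<Longrightarrow> u $$ (p,q) \<noteq> 0 \<Longrightarrow> admissible p q"
    and X: "X \<in> QU n Q"
  shows "\<exists>ops As. elem_op_chain n ops As \<and> As 0 = X \<and> (\<forall>k \<le> length ops. As k \<in> QU n Q)
           \<and> As (length ops) * u = u * X"
  using assms(1,2)
proof (induction "card {(i,j). i < j \<and> j < n \<and> u $$ (i,j) \<noteq> 0}" arbitrary: u rule: less_induct)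
  case less
  define S where "S = {(i,j). i < j \<and> j < n \<and> u $$ (i,j) \<noteq> 0}"
  have uc: "u \<in> carrier_mat n n" using less.prems(1) by (simp add: unitri_def)
  have Xc: "X \<in> carrier_mat n n" by (rule QU_carrier[OF X])
  have finS: "finite S" by (rule finite_subset[of _ "{..<n} \<times> {..<n}"]) (auto simp: S_def)
  show ?case
  proof (cases "S = {}")
    case True
    have "u = 1\<^sub>m n"
      using True less.prems(1) uc unfolding S_def unitri_def
      by (intro eq_matI) (auto, metis linorder_neqE_nat)
    then show ?thesis
      using X Xc by (intro exI[of _ "[]"] exI[of _ "\<lambda>_. X"]) (simp add: elem_op_chain_Nil)
  next
    case False
    define p where "p = Max (fst ` S)"
    have "p \<in> fst ` S" unfolding p_def using finS False by (intro Max_in) auto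
    then obtain q where "(p,q) \<in> S" by auto
    then have pq: "p < q" "q < n" and upq: "u $$ (p,q) \<noteq> 0" unfolding S_def by auto
    have row_q: "u $$ (q,j) = 0" if "q < j" "j < n" for j
    proof (rule ccontr)
      assume "u $$ (q,j) \<noteq> 0"
      then have "q \<le> p" unfolding p_def using finS that by (intro Max_ge) (auto simp: S_def image_iff)
      then show False using pq by simp
    qed
    define c where "c = u $$ (p,q)"
    define u' where "u' = mat n n (\<lambda>(i,j). if (i,j) = (p,q) then 0 else u $$ (i,j))"
    have split: "transvection n p q c * u' = u" and u': "u' \<in> unitri n"
      using unitri_split_transvection[OF less.prems(1) pq row_q] unfolding c_def u'_def by auto
    have u'c: "u' \<in> carrier_mat n n" by (simp add: u'_def)
    have "{(i,j). i < j \<and> j < n \<and> u' $$ (i,j) \<noteq> 0} = S - {(p,q)}"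
      unfolding S_def u'_def by (auto split: if_splits)
    then have card: "card {(i,j). i < j \<and> j < n \<and> u' $$ (i,j) \<noteq> 0} < card S"
      using card_Diff1_less[OF finS \<open>(p,q) \<in> S\<close>] by (simp only:)
    have adm': "admissible i j" if "i < j" "j < n" "u' $$ (i,j) \<noteq> 0" for i j
      using less.prems(2)[of i j] that unfolding u'_def by (auto split: if_splits)
    obtain ops As where chain: "elem_op_chain n ops As" and As0: "As 0 = X"
      and QU: "\<forall>k \<le> length ops. As k \<in> QU n Q" and intertw: "As (length ops) * u' = u' * X"
      using less.hyps[OF card[unfolded S_def] u' adm'] by blast
    from elem_op_chain_extend[OF chain QU intertw u'c Xc pq less.prems(2)[OF pq upq], of c]
    show ?thesis unfolding split using As0 by blast
  qed
qed

lemma borel_similar_QU_elem_ops: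
  assumes A: "A \<in> QU n Q" and B: "B \<in> QU n Q" and AB: "sim_by n (borel n) A B"
  shows "\<exists>ops As. elem_op_chain n ops As \<and> As 0 = A \<and> (\<forall>k \<le> length ops. As k \<in> QU n Q)
     \<and> (\<exists>D \<in> diag_inv n. \<exists>Di \<in> carrier_mat n n. D * Di = 1\<^sub>m n \<and> Di * D = 1\<^sub>m n
           \<and> As (length ops) = D * B * Di)"
proof -
  obtain h hi where h: "h \<in> borel n" "hi \<in> borel n" "h * hi = 1\<^sub>m n" "hi * h = 1\<^sub>m n"
    and B_eq: "B = h * A * hi"
    using AB by (rule sim_by_borelE)
  note hc = borelD(1)[OF h(1)] borelD(1)[OF h(2)]
  have Ac: "A \<in> carrier_mat n n" and Bc: "B \<in> carrier_mat n n" using A B QU_carrier by auto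
  have Bh: "B * h = h * A" unfolding B_eq using similar_mult_right[OF Ac hc h(4)] .
  have hd: "h $$ (i,i) \<noteq> 0" if "i < n" for i using borelD(3)[OF h(1) that] .
  define D where "D = mat_diag n (\<lambda>i. inverse (h $$ (i,i)))"
  define Di where "Di = mat_diag n (\<lambda>i. h $$ (i,i))"
  have DDi: "D * Di = 1\<^sub>m n" "Di * D = 1\<^sub>m n"
    unfolding D_def Di_def using mat_diag_inverse[of n "\<lambda>i. h $$ (i,i)"] hd by auto
  have Dc: "D \<in> carrier_mat n n" "Di \<in> carrier_mat n n" by (simp_all add: D_def Di_def)
  define u where "u = D * h"
  have uc: "u \<in> carrier_mat n n" using Dc hc by (simp add: u_def)
  have u_entry: "u $$ (i,j) = inverse (h $$ (i,i)) * h $$ (i,j)" if "i < n" "j < n" for i j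
    using that hc by (simp add: u_def D_def mat_diag_mult_left[of _ n n])
  have h_low: "h $$ (i,j) = 0" if "j < i" "i < n" for i j
    using borelD(2)[OF h(1)] hc that by auto
  have "u \<in> unitri n"
    unfolding unitri_def
  proof (intro CollectI conjI allI impI uc)
    fix i j assume "i < n" "j < n" "j < i"
    then show "u $$ (i,j) = 0" using u_entry h_low by simp
  next
    fix i assume "i < n"
    then show "u $$ (i,i) = 1" using u_entry hd by simp
  qed
  moreover have "admissible p q" if "p < q" "q < n" "u $$ (p,q) \<noteq> 0" for p q
    using intertwiner_admissible[OF A B h(1) Bh that(1,2)] u_entry[of p q] that by auto
  ultimately obtain ops As where chain: "elem_op_chain n ops As" "As 0 = A"
      "\<forall>k \<le> length ops. As k \<in> QU n Q" and intertw: "As (length ops) * u = u * A"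
    using elem_ops_intertwine[OF _ _ A] by blast
  have Lc: "As (length ops) \<in> carrier_mat n n" using chain(3) QU_carrier by auto
  note assoc = assoc_mult_mat[of _ n n _ n _ n] mult_carrier_mat[of _ n n _ n]
  have "u * (hi * Di) = D * (h * hi) * Di" using Dc hc by (simp add: u_def assoc)
  then have u_inv: "u * (hi * Di) = 1\<^sub>m n" using h(3) Dc DDi by simp
  have "(D * B * Di) * u = D * B * (Di * D) * h" using Dc hc Bc by (simp add: u_def assoc)
  also have "\<dots> = D * (B * h)" using DDi Dc hc Bc by (simp add: assoc)
  also have "\<dots> = u * A" using Bh Dc hc Ac by (simp add: u_def assoc)
  finally have "As (length ops) * u = (D * B * Di) * u" using intertw by simp
  have hiDi: "hi * Di \<in> carrier_mat n n" and DBDi: "D * B * Di \<in> carrier_mat n n"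
    using Dc hc Bc by auto
  have "As (length ops) = As (length ops) * (u * (hi * Di))" using u_inv Lc by simp
  also have "\<dots> = (As (length ops) * u) * (hi * Di)" by (rule assoc_mult_mat[OF Lc uc hiDi, symmetric])
  also have "\<dots> = (D * B * Di * u) * (hi * Di)" unfolding \<open>As (length ops) * u = (D * B * Di) * u\<close> ..
  also have "\<dots> = D * B * Di * (u * (hi * Di))" by (rule assoc_mult_mat[OF DBDi uc hiDi])
  also have "\<dots> = D * B * Di" unfolding u_inv by (rule right_mult_one_mat[OF DBDi])
  finally have "As (length ops) = D * B * Di" .
  moreover have "D \<in> diag_inv n"
    unfolding D_def using hd by (intro mat_diag_diag_inv) simp
  ultimately show ?thesis using chain Dc DDi by blast
qed

end

section \<open>Belitskii's algorithm on QU_n\<close>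

definition belitskii_less :: "nat \<times> nat \<Rightarrow> nat \<times> nat \<Rightarrow> bool" where
  "belitskii_less x y \<longleftrightarrow> fst y < fst x \<or> (fst x = fst y \<and> snd x < snd y)"

lemma belitskii_less_asym: "belitskii_less x y \<Longrightarrow> \<not> belitskii_less y x"
  by (auto simp: belitskii_less_def)

lemma belitskii_less_down_left:
  "belitskii_less (i,j) x \<Longrightarrow> i \<le> l \<Longrightarrow> m \<le> j \<Longrightarrow> belitskii_less (l,m) x"
  by (auto simp: belitskii_less_def)

lemma set_belitskii_positions: "set (belitskii_positions n) = {(i,j). i < j \<and> j < n}"
  by (auto simp: belitskii_positions_def image_iff)

lemma sorted_belitskii_positions: "sorted_wrt belitskii_less (belitskii_positions n)"
proof -
  have "sorted_wrt belitskii_less (concat (map (\<lambda>i. map (\<lambda>j. (i,j)) [Suc i..<n]) (rev [0..<m])))"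
    for m
  proof (induction m)
    case (Suc m)
    have "sorted_wrt belitskii_less (map (\<lambda>j. (m,j)) [Suc m..<n])"
      by (simp add: sorted_wrt_map belitskii_less_def)
    moreover have "belitskii_less x y"
      if "x \<in> set (map (\<lambda>j. (m,j)) [Suc m..<n])"
        "y \<in> set (concat (map (\<lambda>i. map (\<lambda>j. (i,j)) [Suc i..<n]) (rev [0..<m])))" for x y
      using that by (auto simp: belitskii_less_def)
    ultimately show ?case
      using Suc.IH by (simp add: sorted_wrt_append)
  qed simp
  then show ?thesis unfolding belitskii_positions_def .
qed

lemma set_take_sorted_wrt:
  assumes sorted: "sorted_wrt R xs" and asym: "\<And>x y. R x y \<Longrightarrow> \<not> R y x" and k: "k < length xs"
  shows "set (take k xs) = {x \<in> set xs. R x (xs ! k)}"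
proof (intro equalityI subsetI)
  fix x assume "x \<in> set (take k xs)"
  then obtain m where "m < k" "x = xs ! m" using k by (auto simp: in_set_conv_nth)
  then show "x \<in> {x \<in> set xs. R x (xs ! k)}" using k sorted_wrt_nth_less[OF sorted] by auto
next
  fix x assume "x \<in> {x \<in> set xs. R x (xs ! k)}"
  then obtain m where m: "m < length xs" "x = xs ! m" "R x (xs ! k)" by (auto simp: in_set_conv_nth)
  have "m < k"
  proof (rule ccontr)
    assume "\<not> m < k"
    then consider "m = k" | "k < m" by linarith
    then show False
      using m asym sorted_wrt_nth_less[OF sorted, of k m] by cases blast+
  qed
  then show "x \<in> set (take k xs)" using m by (auto simp: in_set_conv_nth)
qed

definition preceding :: "nat \<Rightarrow> nat \<times> nat \<Rightarrow> (nat \<times> nat) set" where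
  "preceding n x = {(i,j). i < j \<and> j < n \<and> belitskii_less (i,j) x}"

lemma preceding_iff:
  "(i,j) \<in> preceding n (p,q) \<longleftrightarrow> i < j \<and> j < n \<and> (p < i \<or> (i = p \<and> j < q))"
  by (auto simp: preceding_def belitskii_less_def)

lemma set_take_belitskii_positions:
  assumes "k < length (belitskii_positions n)"
  shows "set (take k (belitskii_positions n)) = preceding n (belitskii_positions n ! k)"
  using set_take_sorted_wrt[OF sorted_belitskii_positions belitskii_less_asym assms]
  by (auto simp: preceding_def set_belitskii_positions)

lemma belitskii_positions_nth:
  assumes "k < length (belitskii_positions n)" "belitskii_positions n ! k = (p,q)"
  shows "p < q" "q < n"
  using nth_mem[OF assms(1)] assms(2) set_belitskii_positions by auto

definition down_left_closed :: "nat \<Rightarrow> (nat \<times> nat) set \<Rightarrow> bool" where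
  "down_left_closed n P \<longleftrightarrow>
     (\<forall>(i,j) \<in> P. i < j \<and> j < n \<and> (\<forall>l m. i \<le> l \<longrightarrow> m \<le> j \<longrightarrow> l < m \<longrightarrow> (l,m) \<in> P))"

lemma down_left_closed_take: "down_left_closed n (set (take k (belitskii_positions n)))"
proof (cases "k < length (belitskii_positions n)")
  case True
  then show ?thesis
    unfolding set_take_belitskii_positions[OF True] down_left_closed_def preceding_def
    using belitskii_less_down_left by fastforce
next
  case False
  then show ?thesis by (auto simp: set_belitskii_positions down_left_closed_def)
qed

definition agree_on :: "(nat \<times> nat) set \<Rightarrow> 'a mat \<Rightarrow> 'a mat \<Rightarrow> bool" where
  "agree_on P M M' \<longleftrightarrow> (\<forall>x\<in>P. M $$ x = M' $$ x)"

text \<open>The group G^(k) of Belitskii's algorithm, with P the first k positions.\<close>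
definition stabilizer :: "nat \<Rightarrow> (nat \<times> nat) set \<Rightarrow> 'a::field mat \<Rightarrow> 'a mat set" where
  "stabilizer n P X = {g \<in> borel n. \<exists>gi \<in> carrier_mat n n.
     g * gi = 1\<^sub>m n \<and> gi * g = 1\<^sub>m n \<and> agree_on P (g * X * gi) X}"

definition orbit_entries :: "nat \<Rightarrow> 'a::field mat set \<Rightarrow> 'a mat \<Rightarrow> nat \<times> nat \<Rightarrow> 'a set" where
  "orbit_entries n G X x = {Y $$ x | Y. sim_by n G X Y}"

lemma stabilizer_borel: "stabilizer n P X \<subseteq> borel n"
  by (auto simp: stabilizer_def)

lemma stabilizer_empty: "stabilizer n {} X = borel n"
  using borel_invertible by (auto simp: stabilizer_def agree_on_def)

lemma one_stabilizer: "X \<in> carrier_mat n n \<Longrightarrow> 1\<^sub>m n \<in> stabilizer n P X"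
  by (auto simp: stabilizer_def agree_on_def one_borel intro!: bexI[of _ "1\<^sub>m n"])

lemma stabilizer_agree:
  assumes "g \<in> stabilizer n P X" "gi \<in> carrier_mat n n" "gi * g = 1\<^sub>m n"
  shows "agree_on P (g * X * gi) X"
proof -
  obtain gi' where gi': "gi' \<in> carrier_mat n n" "g * gi' = 1\<^sub>m n" "agree_on P (g * X * gi') X"
    using assms(1) unfolding stabilizer_def by blast
  have "g \<in> carrier_mat n n" using assms(1) borelD(1) unfolding stabilizer_def by blast
  then have "gi = gi'" using mult_inverse_unique[OF _ gi'(1) assms(2) gi'(2) assms(3)] by blast
  then show ?thesis using gi'(3) by simp
qed

lemma sim_by_stabilizer_agree: "sim_by n (stabilizer n P X) X Y \<Longrightarrow> agree_on P Y X"
  unfolding sim_by_def using stabilizer_agree by blast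

lemma agree_on_borel_similar:
  assumes X: "X \<in> strict_upper n" "X' \<in> strict_upper n" and P: "down_left_closed n P"
    and agree: "agree_on P X X'" and g: "g \<in> borel n" "gi \<in> borel n"
  shows "agree_on P (g * X * gi) (g * X' * gi)"
  unfolding agree_on_def
proof
  fix x assume "x \<in> P"
  then obtain i j where x: "x = (i,j)" "(i,j) \<in> P" by (cases x) auto
  then have ij: "i < n" "j < n" using P unfolding down_left_closed_def by auto
  have Xc: "X \<in> carrier_mat n n" "X' \<in> carrier_mat n n" using X unfolding strict_upper_def by auto
  have "X $$ (l,m) = X' $$ (l,m)" if lm: "i \<le> l" "l < n" "m \<le> j" for l m
  proof (cases "l < m")
    case True
    then have "(l,m) \<in> P" using P x(2) lm unfolding down_left_closed_def by blast
    then show ?thesis using agree unfolding agree_on_def by auto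
  next
    case False
    then show ?thesis using X lm ij unfolding strict_upper_def by auto
  qed
  then show "(g * X * gi) $$ x = (g * X' * gi) $$ x"
    unfolding x(1) by (rule upper_similar_entry_cong[OF borelD(1,2)[OF g(1)] borelD(1,2)[OF g(2)] Xc _ ij])
qed

lemma stabilizer_cong:
  assumes "X \<in> strict_upper n" "X' \<in> strict_upper n" "down_left_closed n P" "agree_on P X X'"
  shows "stabilizer n P X = stabilizer n P X'"
proof -
  have sub: "stabilizer n P X \<subseteq> stabilizer n P X'"
    if X: "X \<in> strict_upper n" "X' \<in> strict_upper n" and agree: "agree_on P X X'" for X X'
  proof
    fix g assume "g \<in> stabilizer n P X"
    then obtain gi where g: "g \<in> borel n" "gi \<in> carrier_mat n n" "g * gi = 1\<^sub>m n" "gi * g = 1\<^sub>m n"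
      and agree_g: "agree_on P (g * X * gi) X"
      unfolding stabilizer_def by blast
    have "agree_on P (g * X * gi) (g * X' * gi)"
      using agree_on_borel_similar[OF X assms(3) agree g(1) borel_inverse[OF g(1,2,4)]] .
    then have "agree_on P (g * X' * gi) X'"
      using agree_g agree unfolding agree_on_def by auto
    then show "g \<in> stabilizer n P X'" unfolding stabilizer_def using g by blast
  qed
  have "agree_on P X' X" using assms(4) unfolding agree_on_def by auto
  then show ?thesis using sub assms by blast
qed

lemma orbit_entries_scale:
  fixes X :: "'a::field mat"
  assumes X: "X \<in> carrier_mat n n" and pq: "p < q" "q < n"
    and row_zero: "\<And>j. p < j \<Longrightarrow> j < q \<Longrightarrow> X $$ (p,j) = 0"
    and v: "v \<in> orbit_entries n (stabilizer n (preceding n (p,q)) X) X (p,q)" and c: "c \<noteq> 0"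
  shows "c * v \<in> orbit_entries n (stabilizer n (preceding n (p,q)) X) X (p,q)"
proof -
  let ?G = "stabilizer n (preceding n (p,q)) X"
  obtain g gi where g: "g \<in> ?G" "gi \<in> carrier_mat n n" "g * gi = 1\<^sub>m n" "gi * g = 1\<^sub>m n"
    and v_eq: "v = (g * X * gi) $$ (p,q)"
    using v unfolding orbit_entries_def sim_by_def by blast
  define Y where "Y = g * X * gi"
  have gb: "g \<in> borel n" using g(1) stabilizer_borel by auto
  have gc: "g \<in> carrier_mat n n" by (rule borelD(1)[OF gb])
  have Yc: "Y \<in> carrier_mat n n" using gc X g(2) by (simp add: Y_def)
  have agree: "agree_on (preceding n (p,q)) Y X" unfolding Y_def by (rule stabilizer_agree[OF g(1,2,4)])
  define d where "d i = (if i = p then c else 1)" for i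
  have d0: "d i \<noteq> 0" for i using c by (simp add: d_def)
  define D where "D = mat_diag n d"
  define Di where "Di = mat_diag n (\<lambda>i. inverse (d i))"
  have Dc: "D \<in> carrier_mat n n" "Di \<in> carrier_mat n n" by (simp_all add: D_def Di_def)
  have DDi: "D * Di = 1\<^sub>m n" "Di * D = 1\<^sub>m n"
    using mat_diag_inverse[of n d] d0 by (auto simp: D_def Di_def)
  note assoc = assoc_mult_mat[of _ n n _ n _ n] mult_carrier_mat[of _ n n _ n]
  have "(D * g) * (gi * Di) = D * (g * gi) * Di" "(gi * Di) * (D * g) = gi * (Di * D) * g"
    "(D * g) * X * (gi * Di) = D * Y * Di"
    using Dc gc g(2) X by (simp_all add: Y_def assoc)
  then have inv: "(D * g) * (gi * Di) = 1\<^sub>m n" "(gi * Di) * (D * g) = 1\<^sub>m n"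
    and conj: "(D * g) * X * (gi * Di) = D * Y * Di"
    using g(2,3,4) DDi Dc gc by simp_all
  have entry: "(D * Y * Di) $$ (i,j) = d i * Y $$ (i,j) * inverse (d j)" if "i < n" "j < n" for i j
    unfolding D_def Di_def by (rule mat_diag_similar_entry[OF Yc that])
  have "agree_on (preceding n (p,q)) (D * Y * Di) X"
    unfolding agree_on_def
  proof
    fix x assume x: "x \<in> preceding n (p,q)"
    then obtain i j where ij: "x = (i,j)" "i < j" "j < n" "p < i \<or> (i = p \<and> j < q)"
      by (cases x) (auto simp: preceding_iff)
    have "Y $$ (i,j) = X $$ (i,j)" using agree x ij(1) unfolding agree_on_def by auto
    then show "(D * Y * Di) $$ x = X $$ x"
      using entry[of i j] ij row_zero[of j] by (auto simp: d_def)
  qed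
  then have "D * g \<in> ?G"
    unfolding stabilizer_def using borel_mult[OF mat_diag_borel[OF d0] gb] inv conj Dc g(2)
    by (auto simp: D_def)
  then have "sim_by n ?G X (D * Y * Di)"
    unfolding sim_by_def using inv conj Dc g(2) by (metis mult_carrier_mat)
  moreover have "(D * Y * Di) $$ (p,q) = c * v" using entry[of p q] pq by (simp add: d_def v_eq Y_def)
  ultimately show ?thesis unfolding orbit_entries_def by force
qed

context subpermutation_pattern
begin

text \<open>Below the pivot of row p the entry (p,q) can be cleared: replace row p of the
  conjugating matrix by the (normalised) row p of hi, where X = h A hi. Row p of
  hi X = A hi vanishes up to column q because row p of A does.\<close>
lemma zero_in_orbit_entries:
  assumes A: "A \<in> QU n Q" and AX: "sim_by n (borel n) A X" and pq: "p < q" "q < n"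
    and row_zero: "\<And>j. p < j \<Longrightarrow> j < q \<Longrightarrow> X $$ (p,j) = 0"
    and below: "\<not> has_pivot p \<or> q < pivot p"
  shows "0 \<in> orbit_entries n (stabilizer n (preceding n (p,q)) X) X (p,q)"
proof -
  obtain h hi where h: "h \<in> borel n" "hi \<in> borel n" "h * hi = 1\<^sub>m n" "hi * h = 1\<^sub>m n"
    and X_eq: "X = h * A * hi"
    using AX by (rule sim_by_borelE)
  have p: "p < n" using pq by simp
  note hc = borelD(1)[OF h(1)] borelD(1)[OF h(2)]
  have Ac: "A \<in> carrier_mat n n" by (rule QU_carrier[OF A])
  have Xsu: "X \<in> strict_upper n" by (rule sim_by_borel_strict_upper[OF QU_strict_upper[OF A] AX])
  then have Xc: "X \<in> carrier_mat n n" by (simp add: strict_upper_def)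
  have hi_pp: "hi $$ (p,p) \<noteq> 0" by (rule borelD(3)[OF h(2) p])
  have hi_low: "hi $$ (l,j) = 0" if "j < l" "l < n" for l j using borelD(2)[OF h(2)] hc that by auto
  define b where "b j = hi $$ (p,j) / hi $$ (p,p)" for j
  define g where "g = row_replace n p b"
  define gi where "gi = row_replace n p (\<lambda>j. if j = p then 1 else - b j)"
  have b_p: "b p = 1" using hi_pp by (simp add: b_def)
  have inv: "g * gi = 1\<^sub>m n" "gi * g = 1\<^sub>m n"
    unfolding g_def gi_def using row_replace_inverse[where b = b, OF p b_p] by simp_all
  have gb: "g \<in> borel n" unfolding g_def using b_p hi_low p by (intro row_replace_borel) (auto simp: b_def)
  have hiX: "hi * X = A * hi"
  proof -
    have "hi * X = (hi * h) * (A * hi)"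
      unfolding X_eq using hc Ac by (simp add: assoc_mult_mat[of _ n n _ n _ n] mult_carrier_mat[of _ n n _ n])
    then show ?thesis using h(4) hc Ac by simp
  qed
  have A_hi_row: "(A * hi) $$ (p,j) = 0" if j: "j \<le> q" "j < n" for j
  proof -
    have "A $$ (p,l) * hi $$ (l,j) = 0" if l: "l < n" for l
    proof (cases "l \<le> j")
      case True
      then have "A $$ (p,l) = 0" using QU_fits_at[OF A p l] below j unfolding fits_at_def
        by (auto split: if_splits)
      then show ?thesis by simp
    next
      case False then show ?thesis using hi_low l by simp
    qed
    then show ?thesis unfolding index_mult_mat_square[OF Ac hc(2) p j(2)] by (simp add: sum.neutral)
  qed
  have gX: "(g * X) $$ (i,j) = (if i = p then (A * hi) $$ (p,j) / hi $$ (p,p) else X $$ (i,j))"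
    if ij: "i < n" "j < n" for i j
  proof -
    have "(\<Sum>l<n. b l * X $$ (l,j)) = (\<Sum>l<n. hi $$ (p,l) * X $$ (l,j)) / hi $$ (p,p)"
      unfolding b_def sum_divide_distrib by (intro sum.cong) auto
    also have "\<dots> = (A * hi) $$ (p,j) / hi $$ (p,p)"
      unfolding hiX[symmetric] index_mult_mat_square[OF hc(2) Xc p ij(2)] ..
    finally show ?thesis unfolding g_def row_replace_mult_left[OF Xc ij] by simp
  qed
  have Y: "(g * X * gi) $$ (i,j) = (g * X) $$ (i,p) * (if j = p then 1 else - b j)
      + (if j = p then 0 else (g * X) $$ (i,j))" if ij: "i < n" "j < n" for i j
    unfolding gi_def by (rule row_replace_mult_right[OF mult_carrier_mat[OF _ Xc] ij p])
      (simp add: g_def)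
  have Y_row: "(g * X * gi) $$ (p,j) = 0" if "j \<le> q" "j < n" for j
    using Y[OF p that(2)] gX[OF p p] gX[OF p that(2)] A_hi_row[OF that] A_hi_row[of p] pq p by auto
  have Y_low: "(g * X * gi) $$ (i,j) = X $$ (i,j)" if "p < i" "i < n" "j < n" for i j
  proof -
    have "X $$ (i,p) = 0" using Xsu that p unfolding strict_upper_def by auto
    then show ?thesis using Y[OF that(2,3)] gX[OF that(2) p] gX[OF that(2,3)] that by auto
  qed
  have "agree_on (preceding n (p,q)) (g * X * gi) X"
    unfolding agree_on_def
  proof
    fix x assume "x \<in> preceding n (p,q)"
    then obtain i j where ij: "x = (i,j)" "i < j" "j < n" "p < i \<or> (i = p \<and> j < q)"
      by (cases x) (auto simp: preceding_iff)
    then show "(g * X * gi) $$ x = X $$ x"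
      using Y_low[of i j] Y_row[of j] row_zero[of j] by auto
  qed
  then have "g \<in> stabilizer n (preceding n (p,q)) X"
    unfolding stabilizer_def using gb inv by (auto simp: gi_def)
  then have "sim_by n (stabilizer n (preceding n (p,q)) X) X (g * X * gi)"
    unfolding sim_by_def using inv row_replace_carrier unfolding gi_def by blast
  moreover have "(g * X * gi) $$ (p,q) = 0" using Y_row[of q] pq by simp
  ultimately show ?thesis unfolding orbit_entries_def by force
qed

text \<open>At the pivot the entry cannot be cleared: otherwise, with Y = H A H\<inverse>, row p of
  H A would vanish up to column pivot p, forcing H(p,p) = 0.\<close>
lemma zero_notin_orbit_entries:
  assumes A: "A \<in> QU n Q" and AX: "sim_by n (borel n) A X" and pq: "p < q" "q < n"
    and row_zero: "\<And>j. p < j \<Longrightarrow> j < q \<Longrightarrow> X $$ (p,j) = 0"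
    and at: "has_pivot p" "q = pivot p"
  shows "0 \<notin> orbit_entries n (stabilizer n (preceding n (p,q)) X) X (p,q)"
proof
  let ?G = "stabilizer n (preceding n (p,q)) X"
  assume "0 \<in> orbit_entries n ?G X (p,q)"
  then obtain Y where XY: "sim_by n ?G X Y" and Y_pq: "Y $$ (p,q) = 0"
    unfolding orbit_entries_def by auto
  have p: "p < n" using pq by simp
  have Ac: "A \<in> carrier_mat n n" by (rule QU_carrier[OF A])
  have agree: "agree_on (preceding n (p,q)) Y X" by (rule sim_by_stabilizer_agree[OF XY])
  have AY: "sim_by n (borel n) A Y" by (rule sim_by_borel_trans[OF Ac AX XY stabilizer_borel])
  then obtain H Hi where H: "H \<in> borel n" "Hi \<in> borel n" "H * Hi = 1\<^sub>m n" "Hi * H = 1\<^sub>m n"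
    and Y_eq: "Y = H * A * Hi"
    by (rule sim_by_borelE)
  note Hc = borelD(1)[OF H(1)] borelD(1)[OF H(2)]
  have YH: "Y * H = H * A" unfolding Y_eq by (rule similar_mult_right[OF Ac Hc H(4)])
  have Ysu: "Y \<in> strict_upper n" by (rule sim_by_borel_strict_upper[OF QU_strict_upper[OF A] AY])
  then have Yc: "Y \<in> carrier_mat n n" by (simp add: strict_upper_def)
  have Y_row: "Y $$ (p,j) = 0" if j: "j \<le> q" "j < n" for j
  proof -
    consider "j \<le> p" | "p < j \<and> j < q" | "j = q" using j by linarith
    then show ?thesis
    proof cases
      case 1 then show ?thesis using Ysu p j unfolding strict_upper_def by auto
    next
      case 2
      then have "(p,j) \<in> preceding n (p,q)" using j by (simp add: preceding_iff)
      then have "Y $$ (p,j) = X $$ (p,j)" using agree unfolding agree_on_def by auto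
      then show ?thesis using row_zero 2 by simp
    qed (use Y_pq in simp)
  qed
  have "(\<Sum>l<n. H $$ (p,l) * A $$ (l,j)) = 0" if j: "j < Suc q" "j < n" for j
  proof -
    have "Y $$ (p,l) * H $$ (l,j) = 0" if l: "l < n" for l
    proof (cases "l \<le> q")
      case False
      then have "H $$ (l,j) = 0" using borelD(2)[OF H(1)] Hc l j by auto
      then show ?thesis by simp
    qed (use Y_row l j in auto)
    then have "(Y * H) $$ (p,j) = 0"
      unfolding index_mult_mat_square[OF Yc Hc(1) p j(2)] by (simp add: sum.neutral)
    then show ?thesis unfolding YH index_mult_mat_square[OF Hc(1) Ac p j(2)] .
  qed
  then have "H $$ (p,p) = 0"
    using QU_row_combination_zero[OF A, of "Suc q" "\<lambda>l. H $$ (p,l)" p] p at by auto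
  then show False using borelD(3)[OF H(1) p] by simp
qed

lemma orbit_entries_below_pivot:
  assumes A: "A \<in> QU n Q" and AX: "sim_by n (borel n) A X" and pq: "p < q" "q < n"
    and row_zero: "\<And>j. p < j \<Longrightarrow> j < q \<Longrightarrow> X $$ (p,j) = 0"
    and below: "\<not> has_pivot p \<or> q < pivot p"
  defines "V \<equiv> orbit_entries n (stabilizer n (preceding n (p,q)) X) X (p,q)"
  shows "V = {0} \<or> V = UNIV"
proof -
  have Xc: "X \<in> carrier_mat n n"
    using sim_by_borel_strict_upper[OF QU_strict_upper[OF A] AX] by (simp add: strict_upper_def)
  have zero: "0 \<in> V" unfolding V_def by (rule zero_in_orbit_entries[OF assms(1-6)])
  have "V = UNIV" if v: "v \<in> V" "v \<noteq> 0" for v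
  proof -
    have "t \<in> V" for t
    proof (cases "t = 0")
      case False
      have "(t / v) * v \<in> V"
        using orbit_entries_scale[OF Xc pq row_zero v(1)[unfolded V_def], of "t / v"] False v(2)
        unfolding V_def by simp
      then show ?thesis using v(2) by simp
    qed (use zero in simp)
    then show ?thesis by auto
  qed
  then show ?thesis using zero by blast
qed

lemma orbit_entries_at_pivot:
  assumes A: "A \<in> QU n Q" and AX: "sim_by n (borel n) A X" and pq: "p < q" "q < n"
    and row_zero: "\<And>j. p < j \<Longrightarrow> j < q \<Longrightarrow> X $$ (p,j) = 0"
    and at: "has_pivot p" "q = pivot p"
  defines "V \<equiv> orbit_entries n (stabilizer n (preceding n (p,q)) X) X (p,q)"
  shows "V = UNIV - {0}"
proof -
  have Xc: "X \<in> carrier_mat n n"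
    using sim_by_borel_strict_upper[OF QU_strict_upper[OF A] AX] by (simp add: strict_upper_def)
  have no_zero: "0 \<notin> V" unfolding V_def by (rule zero_notin_orbit_entries[OF assms(1-7)])
  have "X $$ (p,q) \<in> V"
    unfolding V_def orbit_entries_def using sim_by_refl[OF one_stabilizer[OF Xc] Xc] by blast
  moreover from this have "X $$ (p,q) \<noteq> 0" using no_zero by auto
  ultimately have "t \<in> V" if "t \<noteq> 0" for t
    using orbit_entries_scale[OF Xc pq row_zero, of "X $$ (p,q)" "t / X $$ (p,q)"] that
    unfolding V_def by auto
  then show ?thesis using no_zero by blast
qed

lemma belitskii_step_fits_at:
  assumes A: "A \<in> QU n Q" and AX: "sim_by n (borel n) A X" and pq: "p < q" "q < n"
    and fits: "\<And>i j. (i,j) \<in> preceding n (p,q) \<Longrightarrow> fits_at X i j"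
    and V: "V = orbit_entries n (stabilizer n (preceding n (p,q)) X) X (p,q)"
    and zero: "V = {0} \<or> V = UNIV \<Longrightarrow> X' $$ (p,q) = 0"
    and one: "V = UNIV - {0} \<Longrightarrow> X' $$ (p,q) = 1"
  shows "fits_at X' p q"
proof (cases "has_pivot p \<and> pivot p < q")
  case True then show ?thesis by (auto simp: fits_at_def)
next
  case False
  have row_zero: "X $$ (p,j) = 0" if "p < j" "j < q" for j
    using fits[of p j] that pq False unfolding fits_at_def preceding_iff by (auto split: if_splits)
  show ?thesis
  proof (cases "has_pivot p \<and> q = pivot p")
    case True
    then show ?thesis
      using one orbit_entries_at_pivot[OF A AX pq row_zero] V unfolding fits_at_def by auto
  next
    case False
    then have "\<not> has_pivot p \<or> q < pivot p" using \<open>\<not> (has_pivot p \<and> pivot p < q)\<close> by auto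
    then show ?thesis
      using zero orbit_entries_below_pivot[OF A AX pq row_zero] V False unfolding fits_at_def by auto
  qed
qed

end

lemma agree_on_take_Suc:
  assumes "k < length xs"
  shows "agree_on (set (take (Suc k) xs)) M M' \<longleftrightarrow>
    (\<forall>m \<le> k. let (i,j) = xs ! m in M $$ (i,j) = M' $$ (i,j))"
proof -
  have "set (take (Suc k) xs) = nth xs ` {0..<Suc k}" using assms by (simp add: nth_image)
  then show ?thesis unfolding agree_on_def by (auto simp: Let_def case_prod_beta less_Suc_eq_le)
qed

locale belitskii_run_QU = subpermutation_pattern +
  fixes A :: "'a mat" and As :: "nat \<Rightarrow> 'a mat" and Gs :: "nat \<Rightarrow> 'a mat set"
  assumes A_QU: "A \<in> QU n Q" and run: "belitskii_run n A As Gs"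
begin

abbreviation first_positions :: "nat \<Rightarrow> (nat \<times> nat) set" where
  "first_positions k \<equiv> set (take k (belitskii_positions n))"

lemma run_step:
  assumes k: "k < length (belitskii_positions n)" and pq: "belitskii_positions n ! k = (p,q)"
  defines "V \<equiv> orbit_entries n (Gs k) (As k) (p,q)"
  shows "sim_by n (Gs k) (As k) (As (Suc k)) \<or> As (Suc k) = As k"
    and "V = {0} \<or> V = UNIV \<Longrightarrow> As (Suc k) $$ (p,q) = 0"
    and "V = UNIV - {0} \<Longrightarrow> As (Suc k) $$ (p,q) = 1"
    and "Gs (Suc k) = {g \<in> Gs k. \<exists>gi \<in> carrier_mat n n. g * gi = 1\<^sub>m n \<and> gi * g = 1\<^sub>m n \<and>
           agree_on (first_positions (Suc k)) (g * As (Suc k) * gi) (As (Suc k))}"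
proof -
  note r = run[unfolded belitskii_run_def, THEN conjunct2, THEN conjunct2, rule_format, OF k,
      unfolded pq Let_def prod.case, folded orbit_entries_def V_def]
  have step: "if V = {0} \<or> V = UNIV then sim_by n (Gs k) (As k) (As (Suc k)) \<and> As (Suc k) $$ (p,q) = 0
      else if V = UNIV - {0} then sim_by n (Gs k) (As k) (As (Suc k)) \<and> As (Suc k) $$ (p,q) = 1
      else As (Suc k) = As k"
    using r by blast
  then show "sim_by n (Gs k) (As k) (As (Suc k)) \<or> As (Suc k) = As k"
    and "V = {0} \<or> V = UNIV \<Longrightarrow> As (Suc k) $$ (p,q) = 0"
    by (auto split: if_splits)
  have "UNIV - {0} \<noteq> ({0} :: 'a set)" "UNIV - {0} \<noteq> (UNIV :: 'a set)"
    using zero_neq_one by blast+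
  then show "V = UNIV - {0} \<Longrightarrow> As (Suc k) $$ (p,q) = 1" using step by auto
  show "Gs (Suc k) = {g \<in> Gs k. \<exists>gi \<in> carrier_mat n n. g * gi = 1\<^sub>m n \<and> gi * g = 1\<^sub>m n \<and>
           agree_on (first_positions (Suc k)) (g * As (Suc k) * gi) (As (Suc k))}"
    using r unfolding agree_on_take_Suc[OF k] Let_def by blast
qed

definition run_invariant :: "nat \<Rightarrow> bool" where
  "run_invariant k \<longleftrightarrow> sim_by n (borel n) A (As k)
     \<and> Gs k = stabilizer n (first_positions k) (As k)
     \<and> (\<forall>(i,j) \<in> first_positions k. fits_at (As k) i j)"

lemma run_invariant_0: "run_invariant 0"
  using run sim_by_refl[OF one_borel QU_carrier[OF A_QU]] stabilizer_empty
  unfolding run_invariant_def belitskii_run_def by auto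

lemma run_invariant_Suc:
  assumes inv: "run_invariant k" and k: "k < length (belitskii_positions n)"
  shows "run_invariant (Suc k)"
proof -
  obtain p q where pq: "belitskii_positions n ! k = (p,q)" by fastforce
  define P where "P = preceding n (p,q)"
  have P: "first_positions k = P" unfolding P_def using set_take_belitskii_positions[OF k] pq by simp
  have P': "first_positions (Suc k) = insert (p,q) P"
    using P pq k by (simp add: take_Suc_conv_app_nth)
  have pqn: "p < q" "q < n" by (rule belitskii_positions_nth[OF k pq])+
  have orbit: "sim_by n (borel n) A (As k)" and G: "Gs k = stabilizer n P (As k)"
    and fits: "\<And>i j. (i,j) \<in> P \<Longrightarrow> fits_at (As k) i j"
    using inv P unfolding run_invariant_def by auto
  note step = run_step[OF k pq]
  have Ac: "A \<in> carrier_mat n n" by (rule QU_carrier[OF A_QU])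
  have su: "As k \<in> strict_upper n" by (rule sim_by_borel_strict_upper[OF QU_strict_upper[OF A_QU] orbit])
  then have Xc: "As k \<in> carrier_mat n n" by (simp add: strict_upper_def)
  have sim: "sim_by n (Gs k) (As k) (As (Suc k))"
    using step(1) sim_by_refl[OF one_stabilizer[OF Xc] Xc] G by auto
  then have agree: "agree_on P (As (Suc k)) (As k)" using sim_by_stabilizer_agree G by simp
  have orbit': "sim_by n (borel n) A (As (Suc k))"
    using sim_by_borel_trans[OF Ac orbit sim] G stabilizer_borel by blast
  have su': "As (Suc k) \<in> strict_upper n"
    by (rule sim_by_borel_strict_upper[OF QU_strict_upper[OF A_QU] orbit'])
  have "down_left_closed n P" using down_left_closed_take[of n k] P by simp
  then have "Gs k = stabilizer n P (As (Suc k))" using G stabilizer_cong[OF su' su _ agree] by simp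
  then have G': "Gs (Suc k) = stabilizer n (insert (p,q) P) (As (Suc k))"
    unfolding step(4) P' by (auto simp: stabilizer_def agree_on_def)
  have "fits_at (As (Suc k)) p q"
    using belitskii_step_fits_at[OF A_QU orbit pqn fits[unfolded P_def] _ step(2,3)] G
    unfolding P_def by simp
  moreover have "fits_at (As (Suc k)) i j" if "(i,j) \<in> P" for i j
    using fits[OF that] agree that unfolding agree_on_def fits_at_def by auto
  ultimately show ?thesis unfolding run_invariant_def P' using orbit' G' by auto
qed

lemma run_invariant: "k \<le> length (belitskii_positions n) \<Longrightarrow> run_invariant k"
  by (induction k) (auto simp: run_invariant_0 run_invariant_Suc)

lemma belitskii_run_result:
  "As (length (belitskii_positions n)) \<in> QU n Q \<and> sim_by n (borel n) A (As (length (belitskii_positions n)))"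
proof -
  have "run_invariant (length (belitskii_positions n))" by (rule run_invariant) simp
  then have orbit: "sim_by n (borel n) A (As (length (belitskii_positions n)))"
    and "\<forall>(i,j) \<in> set (belitskii_positions n). fits_at (As (length (belitskii_positions n))) i j"
    unfolding run_invariant_def by auto
  moreover have "As (length (belitskii_positions n)) \<in> strict_upper n"
    by (rule sim_by_borel_strict_upper[OF QU_strict_upper[OF A_QU] orbit])
  ultimately show ?thesis unfolding QU_iff_strict_upper set_belitskii_positions by auto
qed

end

theorem theorem2p16:
  fixes Q A Ainf :: "'a::field mat" and n :: nat
  assumes "Q \<in> strict_upper n" and "subpermutation n Q"
    and "A \<in> QU n Q"
    and "belitskii_form n A Ainf"
  shows "Ainf \<in> QU n Q \<and>
    (\<exists>ops :: (nat \<times> nat \<times> 'a) list. \<exists>As :: nat \<Rightarrow> 'a mat.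
       (\<forall>k < length ops. let (p,q,c) = ops ! k in p < q \<and> q < n \<and> As (Suc k) = elem_op n p q c (As k))
     \<and> As 0 = A
     \<and> (\<forall>k \<le> length ops. As k \<in> QU n Q)
     \<and> (\<exists>D \<in> diag_inv n. \<exists>Di \<in> carrier_mat n n. D * Di = 1\<^sub>m n \<and> Di * D = 1\<^sub>m n
           \<and> As (length ops) = D * Ainf * Di))"
proof -
  interpret subpermutation_pattern n Q by unfold_locales (fact assms(1), fact assms(2))
  obtain As Gs where run: "belitskii_run n A As Gs"
    and Ainf: "Ainf = As (length (belitskii_positions n))"
    using assms(4) unfolding belitskii_form_def by blast
  interpret belitskii_run_QU n Q A As Gs by unfold_locales (fact assms(3), fact run)
  have "Ainf \<in> QU n Q" and "sim_by n (borel n) A Ainf"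
    using belitskii_run_result unfolding Ainf by auto
  then show ?thesis
    using borel_similar_QU_elem_ops[OF assms(3)] unfolding elem_op_chain_def by blast
qed

end
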